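(* Let $n\ge 2$ and let $\mathcal{A}$ be a connected cochain DG algebra whose underlying graded algebra $\mathcal{A}^{\#}$ is the $k$-algebra generated by degree-one elements $x_1,\dots,x_n$ subject to the relations $x_ix_j=-x_jx_i$ for all $1\le i<j\le n$. Then there is a matrix $M=(m_{ij})_{n\times n}\in M_n(k)$ such that $$\partial_{\mathcal{A}}(x_i)=\sum_{j=1}^n m_{ij}x_j^2\quad\text{for all } i=1,\dots,n,$$ i.e. $(\partial_{\mathcal{A}}(x_1),\dots,\partial_{\mathcal{A}}(x_n))^T=M\,(x_1^2,\dots,x_n^2)^T$; in particular the differential $\partial_{\mathcal{A}}$ is determined by $M$.
   Context: $k$ is an algebraically closed field of characteristic zero. A connected cochain DG algebra is a graded $k$-algebra $\mathcal{A}=\bigoplus_{i\ge 0}\mathcal{A}^i$ with $\mathcal{A}^0=k$, together with a $k$-linear map $\partial_{\mathcal{A}}$ of degree $+1$ with $\partial_{\mathcal{A}}^2=0$ satisfying the Leibniz rule $\partial_{\mathcal{A}}(ab)=\partial_{\mathcal{A}}(a)b+(-1)^{|a|}a\partial_{\mathcal{A}}(b)$ for homogeneous $a,b$. $\mathcal{A}^{\#}$ denotes the underlying graded algebra. Note that no relation is imposed on the squares $x_i^2$. *)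

theory Defs
  imports "HOL-Computational_Algebra.Polynomial"
begin

text \<open>Noncommutative polynomials: coefficient functions on words (lists of generator indices).\<close>
type_synonym 'k ncpoly = "nat list \<Rightarrow> 'k"

definition nc_add :: "'k::comm_ring_1 ncpoly \<Rightarrow> 'k ncpoly \<Rightarrow> 'k ncpoly" where
  "nc_add p q = (\<lambda>w. p w + q w)"

definition nc_mult :: "'k::comm_ring_1 ncpoly \<Rightarrow> 'k ncpoly \<Rightarrow> 'k ncpoly" where
  "nc_mult p q = (\<lambda>w. \<Sum>i\<le>length w. p (take i w) * q (drop i w))"

definition nc_var :: "nat \<Rightarrow> 'k::comm_ring_1 ncpoly" where
  "nc_var i = (\<lambda>w. if w = [i] then 1 else 0)"

text \<open>Elements of the free algebra k<x_0,...,x_{n-1}>: finite support, words in the first n letters.\<close>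
definition nc_poly :: "nat \<Rightarrow> 'k::comm_ring_1 ncpoly \<Rightarrow> bool" where
  "nc_poly n p \<longleftrightarrow> finite {w. p w \<noteq> 0} \<and> (\<forall>w. p w \<noteq> 0 \<longrightarrow> set w \<subseteq> {..<n})"

inductive_set nc_ideal :: "nat \<Rightarrow> 'k::comm_ring_1 ncpoly set \<Rightarrow> 'k ncpoly set"
  for n :: nat and R :: "'k ncpoly set" where
  zero: "(\<lambda>_. 0) \<in> nc_ideal n R"
| add: "p \<in> nc_ideal n R \<Longrightarrow> q \<in> nc_ideal n R \<Longrightarrow> nc_add p q \<in> nc_ideal n R"
| gen: "r \<in> R \<Longrightarrow> nc_poly n a \<Longrightarrow> nc_poly n b \<Longrightarrow> nc_mult (nc_mult a r) b \<in> nc_ideal n R"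

text \<open>The relations x_i x_j + x_j x_i for i < j (no relation on squares).\<close>
definition anticomm_rels :: "nat \<Rightarrow> 'k::comm_ring_1 ncpoly set" where
  "anticomm_rels n = {nc_add (nc_mult (nc_var i) (nc_var j)) (nc_mult (nc_var j) (nc_var i)) | i j. i < j \<and> j < n}"

text \<open>A k-algebra: a ring with a central ring homomorphism from k (scalar action c.a = of_k c * a).\<close>
definition k_algebra :: "('k::field \<Rightarrow> 'a::ring_1) \<Rightarrow> bool" where
  "k_algebra of_k \<longleftrightarrow> of_k 1 = 1 \<and> (\<forall>a b. of_k (a + b) = of_k a + of_k b)
     \<and> (\<forall>a b. of_k (a * b) = of_k a * of_k b) \<and> (\<forall>c a. of_k c * a = a * of_k c)"

definition nc_eval :: "('k::comm_ring_1 \<Rightarrow> 'a::ring_1) \<Rightarrow> (nat \<Rightarrow> 'a) \<Rightarrow> 'k ncpoly \<Rightarrow> 'a" where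
  "nc_eval of_k x p = (\<Sum>w\<in>{w. p w \<noteq> 0}. of_k (p w) * prod_list (map x w))"

text \<open>The algebra is generated by x_0..x_{n-1} subject exactly to the relations
  x_i x_j = - x_j x_i (i<j): evaluation from the free algebra is surjective with kernel
  the two-sided ideal generated by the relations.\<close>
definition presents_anticomm :: "nat \<Rightarrow> ('k::field \<Rightarrow> 'a::ring_1) \<Rightarrow> (nat \<Rightarrow> 'a) \<Rightarrow> bool" where
  "presents_anticomm n of_k x \<longleftrightarrow>
     (\<forall>a. \<exists>p. nc_poly n p \<and> nc_eval of_k x p = a)
   \<and> (\<forall>p. nc_poly n p \<longrightarrow> (nc_eval of_k x p = 0 \<longleftrightarrow> p \<in> nc_ideal n (anticomm_rels n)))"

definition connected_cochain_dga ::
  "('k::field \<Rightarrow> 'a::ring_1) \<Rightarrow> (nat \<Rightarrow> 'a set) \<Rightarrow> ('a \<Rightarrow> 'a) \<Rightarrow> bool" where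
  "connected_cochain_dga of_k Agr d \<longleftrightarrow>
     \<comment> \<open>each A^i is a k-subspace\<close>
     (\<forall>i. 0 \<in> Agr i \<and> (\<forall>a\<in>Agr i. \<forall>b\<in>Agr i. a + b \<in> Agr i) \<and> (\<forall>c. \<forall>a\<in>Agr i. of_k c * a \<in> Agr i))
     \<comment> \<open>A = direct sum of the A^i, i >= 0\<close>
   \<and> (\<forall>a. \<exists>N f. (\<forall>i<N. f i \<in> Agr i) \<and> a = (\<Sum>i<N. f i))
   \<and> (\<forall>N f. (\<forall>i<N. f i \<in> Agr i) \<and> (\<Sum>i<N. f i) = 0 \<longrightarrow> (\<forall>i<N. f i = 0))
     \<comment> \<open>graded multiplication\<close>
   \<and> (\<forall>i j a b. a \<in> Agr i \<longrightarrow> b \<in> Agr j \<longrightarrow> a * b \<in> Agr (i + j))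
     \<comment> \<open>connected: A^0 = k\<close>
   \<and> inj of_k \<and> Agr 0 = range of_k
     \<comment> \<open>differential: k-linear, degree +1, square zero, Leibniz rule\<close>
   \<and> (\<forall>a b. d (a + b) = d a + d b) \<and> (\<forall>c a. d (of_k c * a) = of_k c * d a)
   \<and> (\<forall>i a. a \<in> Agr i \<longrightarrow> d a \<in> Agr (i + 1))
   \<and> (\<forall>a. d (d a) = 0)
   \<and> (\<forall>i a b. a \<in> Agr i \<longrightarrow> d (a * b) = d a * b + (- 1) ^ i * a * d b)"

end

theory Submission
  imports Defs
begin

text \<open>
  Since \<open>d\<close> raises degree by one and \<open>A\<^sup>2\<close> is spanned by the products \<open>x\<^sub>a x\<^sub>b\<close>, one can write
  \<open>d(x\<^sub>i) = \<Sum>\<^sub>a\<^sub>,\<^sub>b P\<^sub>i(a,b) x\<^sub>a x\<^sub>b\<close>. Applying the Leibniz rule to the relation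
  \<open>x\<^sub>i x\<^sub>j + x\<^sub>j x\<^sub>i = 0\<close> gives \<open>[d x\<^sub>i, x\<^sub>j] + [d x\<^sub>j, x\<^sub>i] = 0\<close> in degree 3.
  The linear functional \<open>p \<mapsto> p(s s t) - p(s t s) + p(t s s)\<close> on the free algebra vanishes on the
  ideal of relations, hence descends to \<open>A\<close>; evaluated with \<open>s = j\<close> on the identity above it
  gives \<open>2 (P\<^sub>i(t,j) - P\<^sub>i(j,t)) = 0\<close>. So each \<open>P\<^sub>i\<close> is symmetric off the diagonal, the
  off-diagonal terms cancel in pairs by anticommutativity, and \<open>d(x\<^sub>i) = \<Sum>\<^sub>j P\<^sub>i(j,j) x\<^sub>j\<^sup>2\<close>.
\<close>

section \<open>The free algebra\<close>

definition nc_monom :: "nat list \<Rightarrow> 'k::comm_ring_1 ncpoly" where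
  "nc_monom u = (\<lambda>w. if w = u then 1 else 0)"

lemma nc_var_eq_monom: "nc_var i = nc_monom [i]"
  by (simp add: nc_var_def nc_monom_def)

lemma take_drop_eq_iff:
  assumes "i \<le> length w"
  shows "take i w = u \<and> drop i w = v \<longleftrightarrow> w = u @ v \<and> i = length u"
proof
  assume "take i w = u \<and> drop i w = v"
  moreover have "w = take i w @ drop i w" "length (take i w) = i"
    using assms by simp_all
  ultimately show "w = u @ v \<and> i = length u"
    by metis
qed auto

lemma nc_mult_monom: "nc_mult (nc_monom u) (nc_monom v) = (nc_monom (u @ v) :: 'k::comm_ring_1 ncpoly)"
proof
  fix w :: "nat list"
  have "nc_mult (nc_monom u) (nc_monom v) w = (\<Sum>i\<le>length w. if i = length u \<and> w = u @ v then 1 else (0::'k))"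
    unfolding nc_mult_def
  proof (rule sum.cong)
    fix i
    assume "i \<in> {..length w}"
    then have "take i w = u \<and> drop i w = v \<longleftrightarrow> i = length u \<and> w = u @ v"
      using take_drop_eq_iff by auto
    then show "nc_monom u (take i w) * nc_monom v (drop i w) = (if i = length u \<and> w = u @ v then 1 else (0::'k))"
      by (auto simp: nc_monom_def)
  qed simp
  also have "\<dots> = nc_monom (u @ v) w"
    by (cases "w = u @ v") (simp_all add: nc_monom_def)
  finally show "nc_mult (nc_monom u) (nc_monom v) w = (nc_monom (u @ v) w :: 'k)" .
qed

lemma nc_mult_monom_Nil_left: "nc_mult (nc_monom []) p = p"
proof
  fix w :: "nat list"
  have "nc_mult (nc_monom []) p w = (\<Sum>i\<le>length w. if i = 0 then p w else 0)"
    unfolding nc_mult_def by (rule sum.cong) (auto simp: nc_monom_def)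
  then show "nc_mult (nc_monom []) p w = p w" by simp
qed

lemma nc_mult_monom_Nil_right: "nc_mult p (nc_monom []) = p"
proof
  fix w :: "nat list"
  have "nc_mult p (nc_monom []) w = (\<Sum>i\<le>length w. if i = length w then p w else 0)"
    unfolding nc_mult_def by (rule sum.cong) (auto simp: nc_monom_def)
  then show "nc_mult p (nc_monom []) w = p w" by simp
qed

lemma nc_poly_monom: "set u \<subseteq> {..<n} \<Longrightarrow> nc_poly n (nc_monom u)"
  by (simp add: nc_poly_def nc_monom_def)

lemma nc_poly_lincomb:
  assumes "nc_poly n p" "nc_poly n q"
  shows "nc_poly n (\<lambda>w. c * p w + e * q w)"
proof -
  have "{w. c * p w + e * q w \<noteq> 0} \<subseteq> {w. p w \<noteq> 0} \<union> {w. q w \<noteq> 0}"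
    by auto
  with assms show ?thesis
    unfolding nc_poly_def by (metis (mono_tags, lifting) finite_Un finite_subset mult_zero_right add_0)
qed

lemma nc_mult_mult_length3:
  assumes "\<And>w. r w \<noteq> 0 \<Longrightarrow> length w = 2"
  shows "nc_mult (nc_mult a r) b [u, v, w] = a [] * r [u, v] * b [w] + a [u] * r [v, w] * b []"
proof -
  have "r [] = 0" "\<And>u. r [u] = 0" "\<And>u v w. r [u, v, w] = 0"
    using assms by fastforce+
  then show ?thesis
    by (simp add: nc_mult_def atMost_Suc numeral_3_eq_3 algebra_simps)
qed

lemma anticomm_rels_eq:
  "anticomm_rels n = {nc_add (nc_monom [i, j]) (nc_monom [j, i]) | i j. i < j \<and> j < n}"
  by (simp add: anticomm_rels_def nc_var_eq_monom nc_mult_monom)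

text \<open>
  A relation term \<open>a (x\<^sub>i x\<^sub>j + x\<^sub>j x\<^sub>i) b\<close> has equal coefficients on two words that differ by
  one adjacent transposition. The words \<open>s s t\<close>, \<open>s t s\<close>, \<open>t s s\<close> form a chain of such
  transpositions, taken with alternating signs, and \<open>x\<^sub>s x\<^sub>s\<close> occurs in no relation; hence
  this functional kills the ideal.
\<close>
definition nc_cubic_functional :: "nat \<Rightarrow> nat \<Rightarrow> 'k::comm_ring_1 ncpoly \<Rightarrow> 'k" where
  "nc_cubic_functional s t p = p [s, s, t] - p [s, t, s] + p [t, s, s]"

lemma nc_cubic_functional_lincomb:
  "nc_cubic_functional s t (\<lambda>w. c * p w + e * q w) = c * nc_cubic_functional s t p + e * nc_cubic_functional s t q"
  by (simp add: nc_cubic_functional_def algebra_simps)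

lemma nc_cubic_functional_ideal:
  assumes "q \<in> nc_ideal n (anticomm_rels n)"
  shows "nc_cubic_functional s t q = 0"
  using assms
proof (induction rule: nc_ideal.induct)
  case zero
  then show ?case by (simp add: nc_cubic_functional_def)
next
  case (add p q)
  then show ?case by (simp add: nc_cubic_functional_def nc_add_def algebra_simps)
next
  case (gen r a b)
  then obtain i j where "i < j" and r: "r = nc_add (nc_monom [i, j]) (nc_monom [j, i])"
    by (auto simp: anticomm_rels_eq)
  then have "r [s, s] = 0" and "r [t, s] = r [s, t]"
    by (auto simp: nc_add_def nc_monom_def)
  moreover have "\<And>w. r w \<noteq> 0 \<Longrightarrow> length w = 2"
    by (auto simp: r nc_add_def nc_monom_def split: if_splits)
  ultimately show ?case
    by (simp add: nc_cubic_functional_def nc_mult_mult_length3 algebra_simps)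
qed

lemma sum_sum_delta:
  fixes f :: "nat \<Rightarrow> nat \<Rightarrow> 'b::comm_monoid_add"
  assumes "s < n" "t < n"
  shows "(\<Sum>a<n. \<Sum>b<n. if a = s \<and> b = t then f a b else 0) = f s t"
proof -
  have "(\<Sum>b<n. if a = s \<and> b = t then f a b else 0) = (if a = s then f a t else 0)" for a
    using assms by (cases "a = s") simp_all
  then show ?thesis
    using assms by simp
qed

section \<open>Algebras presented by anticommuting generators\<close>

locale anticomm_presentation =
  fixes of_k :: "'k::field \<Rightarrow> 'a::ring_1" and x :: "nat \<Rightarrow> 'a" and n :: nat
  assumes k_algebra: "k_algebra of_k"
    and presents: "presents_anticomm n of_k x"
begin

lemma of_k_1 [simp]: "of_k 1 = 1"
  and of_k_add: "of_k (a + b) = of_k a + of_k b"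
  and of_k_mult: "of_k (a * b) = of_k a * of_k b"
  and of_k_commute: "of_k c * y = y * of_k c"
  using k_algebra unfolding k_algebra_def by blast+

lemma of_k_0 [simp]: "of_k 0 = 0"
  using of_k_add[of 0 0] by simp

lemma of_k_minus: "of_k (- a) = - of_k a"
proof -
  have "of_k a + of_k (- a) = 0"
    using of_k_add[of a "- a"] by simp
  then show ?thesis
    by (rule minus_unique[symmetric])
qed

lemma nc_eval_surj: "\<exists>p. nc_poly n p \<and> nc_eval of_k x p = y"
  using presents unfolding presents_anticomm_def by blast

lemma nc_eval_eq_0_iff: "nc_poly n p \<Longrightarrow> nc_eval of_k x p = 0 \<longleftrightarrow> p \<in> nc_ideal n (anticomm_rels n)"
  using presents unfolding presents_anticomm_def by blast

lemma nc_eval_superset: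
  assumes "finite S" "{w. p w \<noteq> 0} \<subseteq> S"
  shows "nc_eval of_k x p = (\<Sum>w\<in>S. of_k (p w) * prod_list (map x w))"
  unfolding nc_eval_def by (rule sum.mono_neutral_left) (use assms in auto)

lemma nc_eval_lincomb:
  assumes "nc_poly n p" "nc_poly n q"
  shows "nc_eval of_k x (\<lambda>w. c * p w + e * q w) = of_k c * nc_eval of_k x p + of_k e * nc_eval of_k x q"
proof -
  define S where "S = {w. p w \<noteq> 0} \<union> {w. q w \<noteq> 0}"
  have "finite S"
    using assms by (simp add: S_def nc_poly_def)
  have "nc_eval of_k x (\<lambda>w. c * p w + e * q w) = (\<Sum>w\<in>S. of_k (c * p w + e * q w) * prod_list (map x w))"
    by (rule nc_eval_superset[OF \<open>finite S\<close>]) (auto simp: S_def)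
  also have "\<dots> = of_k c * (\<Sum>w\<in>S. of_k (p w) * prod_list (map x w))
      + of_k e * (\<Sum>w\<in>S. of_k (q w) * prod_list (map x w))"
    by (simp add: of_k_add of_k_mult sum_distrib_left sum.distrib distrib_right mult.assoc)
  also have "\<dots> = of_k c * nc_eval of_k x p + of_k e * nc_eval of_k x q"
    using nc_eval_superset[OF \<open>finite S\<close>, of p] nc_eval_superset[OF \<open>finite S\<close>, of q]
    by (auto simp: S_def)
  finally show ?thesis .
qed

lemma nc_eval_monom: "nc_eval of_k x (nc_monom u) = prod_list (map x u)"
  using nc_eval_superset[of "{u}" "nc_monom u"] by (simp add: nc_monom_def)

lemma generators_anticommute:
  assumes "a < n" "b < n" "a \<noteq> b"
  shows "x a * x b + x b * x a = 0"
proof -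
  define r :: "'k ncpoly" where "r = nc_add (nc_monom [a, b]) (nc_monom [b, a])"
  have "r = nc_add (nc_monom [min a b, max a b]) (nc_monom [max a b, min a b])"
    by (cases "a < b") (auto simp: r_def nc_add_def add.commute min_def max_def)
  moreover have "min a b < max a b" "max a b < n"
    using assms by auto
  ultimately have "r \<in> anticomm_rels n"
    unfolding anticomm_rels_eq by blast
  then have "r \<in> nc_ideal n (anticomm_rels n)"
    using nc_ideal.gen[of r "anticomm_rels n" n "nc_monom []" "nc_monom []"]
    by (simp add: nc_poly_monom nc_mult_monom_Nil_left nc_mult_monom_Nil_right)
  have r: "r = (\<lambda>w. 1 * nc_monom [a, b] w + 1 * nc_monom [b, a] w)"
    by (simp add: r_def nc_add_def)
  have monoms: "nc_poly n (nc_monom [a, b])" "nc_poly n (nc_monom [b, a])"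
    using assms by (auto intro: nc_poly_monom)
  then have "nc_poly n r"
    unfolding r by (rule nc_poly_lincomb)
  with \<open>r \<in> nc_ideal n (anticomm_rels n)\<close> have "nc_eval of_k x r = 0"
    using nc_eval_eq_0_iff by blast
  moreover have "nc_eval of_k x r = of_k 1 * (x a * x b) + of_k 1 * (x b * x a)"
    unfolding r nc_eval_lincomb[OF monoms] by (simp add: nc_eval_monom)
  ultimately show ?thesis
    by simp
qed

definition cubic_functional :: "nat \<Rightarrow> nat \<Rightarrow> 'a \<Rightarrow> 'k" where
  "cubic_functional s t y = nc_cubic_functional s t (SOME p. nc_poly n p \<and> nc_eval of_k x p = y)"

lemma cubic_functional_eval:
  assumes "nc_poly n p"
  shows "cubic_functional s t (nc_eval of_k x p) = nc_cubic_functional s t p"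
proof -
  define q where "q = (SOME q. nc_poly n q \<and> nc_eval of_k x q = nc_eval of_k x p)"
  have q: "nc_poly n q \<and> nc_eval of_k x q = nc_eval of_k x p"
    unfolding q_def by (rule someI[of _ p]) (simp add: assms)
  then have "nc_poly n (\<lambda>w. 1 * q w + (- 1) * p w)"
    using assms by (blast intro: nc_poly_lincomb)
  moreover have "nc_eval of_k x (\<lambda>w. 1 * q w + (- 1) * p w) = 0"
    using q assms nc_eval_lincomb[of q p 1 "- 1"] by (simp add: of_k_minus)
  ultimately have "nc_cubic_functional s t (\<lambda>w. 1 * q w + (- 1) * p w) = 0"
    by (simp add: nc_eval_eq_0_iff nc_cubic_functional_ideal)
  then show ?thesis
    unfolding nc_cubic_functional_lincomb by (simp add: cubic_functional_def q_def[symmetric])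
qed

lemma cubic_functional_lincomb:
  "cubic_functional s t (of_k c * y + of_k e * z) = c * cubic_functional s t y + e * cubic_functional s t z"
proof -
  obtain p q where p: "nc_poly n p" "nc_eval of_k x p = y" and q: "nc_poly n q" "nc_eval of_k x q = z"
    using nc_eval_surj by meson
  have "cubic_functional s t (of_k c * nc_eval of_k x p + of_k e * nc_eval of_k x q)
      = c * cubic_functional s t (nc_eval of_k x p) + e * cubic_functional s t (nc_eval of_k x q)"
    using p(1) q(1)
    by (simp add: nc_eval_lincomb[symmetric] cubic_functional_eval nc_poly_lincomb nc_cubic_functional_lincomb)
  then show ?thesis
    by (simp only: p(2) q(2))
qed

lemma cubic_functional_add: "cubic_functional s t (y + z) = cubic_functional s t y + cubic_functional s t z"
  using cubic_functional_lincomb[of s t 1 y 1 z] by simp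

lemma cubic_functional_scale: "cubic_functional s t (of_k c * y) = c * cubic_functional s t y"
  using cubic_functional_lincomb[of s t c y 0 0] by simp

lemma cubic_functional_zero: "cubic_functional s t 0 = 0"
  using cubic_functional_scale[of s t 0 0] by simp

lemma cubic_functional_diff: "cubic_functional s t (y - z) = cubic_functional s t y - cubic_functional s t z"
  using cubic_functional_lincomb[of s t 1 y "- 1" z] by (simp add: of_k_minus)

lemma cubic_functional_sum: "cubic_functional s t (\<Sum>i\<in>I. f i) = (\<Sum>i\<in>I. cubic_functional s t (f i))"
  by (induction I rule: infinite_finite_induct) (simp_all add: cubic_functional_zero cubic_functional_add)

lemma cubic_functional_monom3:
  assumes "a < n" "b < n" "c < n"
  shows "cubic_functional s t (x a * x b * x c) = nc_cubic_functional s t (nc_monom [a, b, c])"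
  using cubic_functional_eval[OF nc_poly_monom, of "[a, b, c]"] assms
  by (simp add: nc_eval_monom mult.assoc)

definition quad_form :: "(nat \<Rightarrow> nat \<Rightarrow> 'k) \<Rightarrow> 'a" where
  "quad_form Q = (\<Sum>a<n. \<Sum>b<n. of_k (Q a b) * (x a * x b))"

lemma cubic_functional_quad_form_mult:
  assumes "c < n"
  shows "cubic_functional s t (quad_form Q * x c)
    = (\<Sum>a<n. \<Sum>b<n. Q a b * nc_cubic_functional s t (nc_monom [a, b, c]))"
  using assms
  by (simp add: quad_form_def sum_distrib_right mult.assoc cubic_functional_sum cubic_functional_scale
      flip: cubic_functional_monom3)

lemma cubic_functional_mult_quad_form:
  assumes "c < n"
  shows "cubic_functional s t (x c * quad_form Q)
    = (\<Sum>a<n. \<Sum>b<n. Q a b * nc_cubic_functional s t (nc_monom [c, a, b]))"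
proof -
  have "x c * (of_k q * y) = of_k q * (x c * y)" for q y
    by (metis mult.assoc of_k_commute)
  then show ?thesis
    using assms
    by (simp add: quad_form_def sum_distrib_left cubic_functional_sum cubic_functional_scale
        mult.assoc flip: cubic_functional_monom3)
qed

lemma cubic_functional_quad_form_commutator:
  assumes "s \<noteq> t" "s < n" "t < n" "c < n"
  shows "cubic_functional s t (quad_form Q * x c - x c * quad_form Q)
    = (if c = s then 2 * (Q t s - Q s t) else 0)"
proof -
  have pointwise: "Q a b * (nc_cubic_functional s t (nc_monom [a, b, c])
        - nc_cubic_functional s t (nc_monom [c, a, b]))
      = (if c = s then 2 * ((if a = t \<and> b = s then Q a b else 0) - (if a = s \<and> b = t then Q a b else 0))
         else 0)"
    for a b
    using \<open>s \<noteq> t\<close> by (auto simp: nc_cubic_functional_def nc_monom_def)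
  have "cubic_functional s t (quad_form Q * x c - x c * quad_form Q)
      = (\<Sum>a<n. \<Sum>b<n. Q a b * (nc_cubic_functional s t (nc_monom [a, b, c])
          - nc_cubic_functional s t (nc_monom [c, a, b])))"
    using \<open>c < n\<close>
    by (simp only: cubic_functional_diff cubic_functional_quad_form_mult cubic_functional_mult_quad_form
        right_diff_distrib sum_subtractf)
  also have "\<dots> = (\<Sum>a<n. \<Sum>b<n. if c = s
      then 2 * ((if a = t \<and> b = s then Q a b else 0) - (if a = s \<and> b = t then Q a b else 0)) else 0)"
    by (simp only: pointwise)
  also have "\<dots> = (if c = s then 2 * (Q t s - Q s t) else 0)"
  proof (cases "c = s")
    case True
    then show ?thesis
      using assms by (simp add: sum_subtractf sum_sum_delta flip: sum_distrib_left)
  qed simp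
  finally show ?thesis .
qed

lemma double_cancel:
  fixes y z :: 'a
  assumes "(2::'k) \<noteq> 0" "y + y = z + z"
  shows "y = z"
proof -
  have "(1::'k) / 2 + 1 / 2 = 1"
    by (simp only: add_divide_distrib[symmetric] one_add_one divide_self[OF assms(1)])
  then have "of_k (1 / 2) + of_k (1 / 2) = 1"
    by (simp only: of_k_add[symmetric] of_k_1)
  then have half: "of_k (1 / 2) * (w + w) = w" for w
    by (simp only: distrib_left distrib_right[symmetric] mult_1_left)
  have "y = of_k (1 / 2) * (y + y)"
    by (rule half[symmetric])
  also have "\<dots> = z"
    by (simp only: assms(2) half)
  finally show ?thesis .
qed

lemma quad_form_diagonal:
  assumes "(2::'k) \<noteq> 0" and sym: "\<And>a b. a < n \<Longrightarrow> b < n \<Longrightarrow> a \<noteq> b \<Longrightarrow> Q a b = Q b a"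
  shows "quad_form Q = (\<Sum>a<n. of_k (Q a a) * (x a * x a))"
proof -
  define F where "F a b = of_k (Q a b) * (x a * x b)" for a b
  have F_swap: "F a b + F b a = (if a = b then F a a + F a a else 0)" if "a < n" "b < n" for a b
  proof (cases "a = b")
    case False
    then have "F a b + F b a = of_k (Q a b) * (x a * x b + x b * x a)"
      by (simp add: F_def distrib_left sym[OF that False])
    with generators_anticommute[OF that False] False show ?thesis
      by simp
  qed simp
  have "(\<Sum>a<n. \<Sum>b<n. F b a) = (\<Sum>a<n. \<Sum>b<n. F a b)"
    by (rule sum.swap)
  then have "quad_form Q + quad_form Q = (\<Sum>a<n. \<Sum>b<n. F a b) + (\<Sum>a<n. \<Sum>b<n. F b a)"
    by (simp only: quad_form_def F_def)
  also have "\<dots> = (\<Sum>a<n. \<Sum>b<n. F a b + F b a)"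
    by (simp only: sum.distrib)
  also have "\<dots> = (\<Sum>a<n. \<Sum>b<n. if a = b then F a a + F a a else 0)"
    by (intro sum.cong refl) (simp add: F_swap)
  also have "\<dots> = (\<Sum>a<n. F a a) + (\<Sum>a<n. F a a)"
    by (simp add: sum.delta sum.distrib)
  finally have "quad_form Q = (\<Sum>a<n. F a a)"
    by (rule double_cancel[OF assms(1)])
  then show ?thesis
    by (simp only: F_def)
qed

end

section \<open>Differentials on anticommuting generators\<close>

locale anticomm_cdga = anticomm_presentation of_k x n
  for of_k :: "'k::field \<Rightarrow> 'a::ring_1" and x n +
  fixes Agr :: "nat \<Rightarrow> 'a set" and d :: "'a \<Rightarrow> 'a"
  assumes cdga: "connected_cochain_dga of_k Agr d"
    and generators_deg1: "\<And>i. i < n \<Longrightarrow> x i \<in> Agr 1"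
begin

lemma Agr_zero: "0 \<in> Agr m"
  using cdga by (simp add: connected_cochain_dga_def)

lemma Agr_add: "y \<in> Agr m \<Longrightarrow> z \<in> Agr m \<Longrightarrow> y + z \<in> Agr m"
  using cdga by (simp add: connected_cochain_dga_def)

lemma Agr_scale: "y \<in> Agr m \<Longrightarrow> of_k c * y \<in> Agr m"
  using cdga by (simp add: connected_cochain_dga_def)

lemma Agr_mult: "y \<in> Agr i \<Longrightarrow> z \<in> Agr j \<Longrightarrow> y * z \<in> Agr (i + j)"
  using cdga by (simp add: connected_cochain_dga_def)

lemma Agr_0: "Agr 0 = range of_k"
  using cdga by (simp add: connected_cochain_dga_def)

lemma Agr_sum_eq_0: "(\<And>i. i < N \<Longrightarrow> f i \<in> Agr i) \<Longrightarrow> (\<Sum>i<N. f i) = 0 \<Longrightarrow> i < N \<Longrightarrow> f i = 0"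
  using cdga unfolding connected_cochain_dga_def by metis

lemma d_add: "d (y + z) = d y + d z"
  using cdga unfolding connected_cochain_dga_def by blast

lemma d_Agr: "y \<in> Agr i \<Longrightarrow> d y \<in> Agr (Suc i)"
  using cdga unfolding connected_cochain_dga_def by simp

lemma d_mult: "y \<in> Agr i \<Longrightarrow> d (y * z) = d y * z + (- 1) ^ i * y * d z"
  using cdga unfolding connected_cochain_dga_def by blast

lemma Agr_diff:
  assumes "y \<in> Agr m" "z \<in> Agr m"
  shows "y - z \<in> Agr m"
proof -
  have "y + of_k (- 1) * z \<in> Agr m"
    using assms by (intro Agr_add Agr_scale)
  then show ?thesis
    by (simp add: of_k_minus)
qed

lemma Agr_sum: "(\<And>i. i \<in> I \<Longrightarrow> f i \<in> Agr m) \<Longrightarrow> sum f I \<in> Agr m"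
  by (induction I rule: infinite_finite_induct) (auto simp: Agr_zero Agr_add)

lemma prod_list_Agr: "set w \<subseteq> {..<n} \<Longrightarrow> prod_list (map x w) \<in> Agr (length w)"
proof (induction w)
  case Nil
  have "1 \<in> range of_k"
    by (metis of_k_1 rangeI)
  then show ?case
    by (simp add: Agr_0)
next
  case (Cons a w)
  then show ?case
    using Agr_mult[OF generators_deg1] by simp
qed

lemma graded_component_eq:
  assumes "y \<in> Agr m" "m < N" "\<And>i. i < N \<Longrightarrow> f i \<in> Agr i" "y = (\<Sum>i<N. f i)"
  shows "f m = y"
proof -
  define g where "g i = f i - (if i = m then y else 0)" for i
  have "g i \<in> Agr i" if "i < N" for i
    using assms(1) assms(3)[OF that] by (simp add: g_def Agr_diff Agr_zero)
  moreover have "(\<Sum>i<N. g i) = 0"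
    using assms(2,4) by (simp add: g_def sum_subtractf)
  ultimately have "g m = 0"
    using Agr_sum_eq_0 assms(2) by blast
  then show ?thesis
    by (simp add: g_def)
qed

lemma nc_eval_homogeneous:
  assumes "nc_poly n p" "nc_eval of_k x p \<in> Agr m"
  shows "nc_eval of_k x p = (\<Sum>w | p w \<noteq> 0 \<and> length w = m. of_k (p w) * prod_list (map x w))"
proof -
  define S where "S = {w. p w \<noteq> 0}"
  define f where "f i = (\<Sum>w | w \<in> S \<and> length w = i. of_k (p w) * prod_list (map x w))" for i
  define N where "N = Suc (max m (Max (length ` S)))"
  have "finite S" and S_words: "\<And>w. w \<in> S \<Longrightarrow> set w \<subseteq> {..<n}"
    using assms(1) by (auto simp: S_def nc_poly_def)
  then have "length ` S \<subseteq> {..<N}"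
    by (auto simp: N_def less_Suc_eq_le le_max_iff_disj)
  then have "nc_eval of_k x p = (\<Sum>i<N. f i)"
    unfolding nc_eval_def f_def S_def[symmetric]
    by (rule sum.group[symmetric, OF \<open>finite S\<close> finite_lessThan])
  moreover have "f i \<in> Agr i" for i
    unfolding f_def by (intro Agr_sum) (auto intro: Agr_scale dest: S_words prod_list_Agr)
  moreover have "m < N"
    by (simp add: N_def)
  ultimately have "f m = nc_eval of_k x p"
    using graded_component_eq assms(2) by blast
  then show ?thesis
    by (simp add: f_def S_def)
qed

lemma Agr_2_eq_quad_form:
  assumes "y \<in> Agr 2"
  shows "\<exists>Q. y = quad_form Q"
proof -
  obtain p where p: "nc_poly n p" "nc_eval of_k x p = y"
    using nc_eval_surj by blast
  define W where "W = (\<lambda>(a, b). [a, b]) ` ({..<n} \<times> {..<n})"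
  have "{w. p w \<noteq> 0 \<and> length w = 2} \<subseteq> W"
  proof
    fix w
    assume w: "w \<in> {w. p w \<noteq> 0 \<and> length w = 2}"
    then obtain a b where ab: "w = [a, b]"
      by (auto simp: numeral_2_eq_2 length_Suc_conv)
    with w p(1) have "a < n" "b < n"
      by (auto simp: nc_poly_def)
    then show "w \<in> W"
      unfolding W_def ab by (auto intro: image_eqI[of _ _ "(a, b)"])
  qed
  have "y = (\<Sum>w | p w \<noteq> 0 \<and> length w = 2. of_k (p w) * prod_list (map x w))"
    using nc_eval_homogeneous[OF p(1)] p(2) assms by simp
  also have "\<dots> = (\<Sum>w\<in>W. of_k (p w) * prod_list (map x w))"
    by (rule sum.mono_neutral_left) (use \<open>_ \<subseteq> W\<close> in \<open>auto simp: W_def\<close>)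
  also have "\<dots> = (\<Sum>(a, b)\<in>{..<n} \<times> {..<n}. of_k (p [a, b]) * (x a * x b))"
    unfolding W_def by (subst sum.reindex) (auto simp: inj_on_def intro!: sum.cong)
  also have "\<dots> = quad_form (\<lambda>a b. p [a, b])"
    by (simp add: quad_form_def sum.cartesian_product)
  finally show ?thesis
    by blast
qed

lemma d_anticomm_relation:
  assumes "i < n" "j < n" "i \<noteq> j"
  shows "(d (x i) * x j - x j * d (x i)) + (d (x j) * x i - x i * d (x j)) = 0"
proof -
  have d_zero: "d 0 = 0"
    using d_add[of 0 0] by simp
  have "d (x i * x j) + d (x j * x i) = 0"
    using generators_anticommute[OF assms] d_add d_zero by metis
  moreover have "d (x a * x b) = d (x a) * x b - x a * d (x b)" if "a < n" for a b
    using d_mult[OF generators_deg1[OF that]] by simp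
  ultimately show ?thesis
    using assms by (simp add: algebra_simps)
qed

lemma d_coeffs_symmetric:
  assumes "(2::'k) \<noteq> 0" and P: "\<And>i. i < n \<Longrightarrow> d (x i) = quad_form (P i)"
    and "i < n" "a < n" "b < n" "a \<noteq> b"
  shows "P i a b = P i b a"
proof -
  have swap: "P i t j = P i j t" if "j < n" "t < n" "j \<noteq> i" "t \<noteq> j" for j t
  proof -
    have "cubic_functional j t ((quad_form (P i) * x j - x j * quad_form (P i))
        + (quad_form (P j) * x i - x i * quad_form (P j))) = 0"
      using d_anticomm_relation[OF \<open>i < n\<close> that(1)] that(3) P[OF \<open>i < n\<close>] P[OF that(1)]
      by (simp add: cubic_functional_zero)
    then have "2 * (P i t j - P i j t) = 0"
      using that \<open>i < n\<close>
      by (simp add: cubic_functional_add cubic_functional_quad_form_commutator)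
    with assms(1) show ?thesis
      by simp
  qed
  show ?thesis
  proof (cases "b = i")
    case True
    then show ?thesis
      using swap[of a b] assms by auto
  next
    case False
    then show ?thesis
      using swap[of b a] assms by auto
  qed
qed

end

theorem theorem2p1:
  fixes of_k :: "'k::field_char_0 \<Rightarrow> 'a::ring_1"
    and Agr :: "nat \<Rightarrow> 'a set"
    and d :: "'a \<Rightarrow> 'a"
    and x :: "nat \<Rightarrow> 'a"
    and n :: nat
  assumes alg_closed: "\<forall>p :: 'k poly. degree p \<ge> 1 \<longrightarrow> (\<exists>z. poly p z = 0)"
    and n2: "n \<ge> 2"
    and kalg: "k_algebra of_k"
    and dga: "connected_cochain_dga of_k Agr d"
    and deg1: "\<forall>i<n. x i \<in> Agr 1"
    and pres: "presents_anticomm n of_k x"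
  shows "\<exists>M :: nat \<Rightarrow> nat \<Rightarrow> 'k. \<forall>i<n. d (x i) = (\<Sum>j<n. of_k (M i j) * (x j * x j))"
proof -
  interpret anticomm_cdga of_k x n Agr d
    using kalg pres dga deg1 by unfold_locales auto
  have "\<forall>i\<in>{..<n}. \<exists>Q. d (x i) = quad_form Q"
    using Agr_2_eq_quad_form d_Agr[OF generators_deg1] by (simp add: numeral_2_eq_2)
  then obtain P where P: "\<And>i. i < n \<Longrightarrow> d (x i) = quad_form (P i)"
    by (metis bchoice lessThan_iff)
  have two: "(2::'k) \<noteq> 0"
    by simp
  show ?thesis
  proof (intro exI allI impI)
    fix i
    assume "i < n"
    with P show "d (x i) = (\<Sum>j<n. of_k (P i j j) * (x j * x j))"
      using quad_form_diagonal[OF two d_coeffs_symmetric[OF two P \<open>i < n\<close>]] by simp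
  qed
qed

end
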